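(* Let $N\in\mathbb{N}$ and $a\in\mathbb{N}$. Then there exist $p,c,d\in\mathbb{N}$ such that $\gcd(a,p)=\gcd(a,c)=\gcd(c,d)=1$, $pc\equiv pd\equiv 1\pmod a$, $p>N$, $pc>aN$, and $d>\max\{(a-1)pc+a(N-1),\ ac\}$. *)

theory Defs
  imports "HOL-Number_Theory.Number_Theory"
begin

end

theory Submission
  imports Defs
begin

text \<open>Take \<open>p = c = q\<close> with \<open>q = a N + 1\<close> and \<open>d = a q\<^sup>3 + 1\<close>. Both are \<open>1\<close> modulo \<open>a\<close>,
  which gives all congruence and coprimality conditions with \<open>a\<close>; \<open>d\<close> is \<open>1\<close> modulo \<open>q\<close>,
  so \<open>gcd q d = 1\<close>; and the cubic term in \<open>d\<close> dominates the quadratic bound.\<close>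

lemma cong_mult_add_one: "[k * m + 1 = 1] (mod m)" for k m :: nat
  unfolding cong_def by (metis mod_mult_self3)

lemma gcd_mult_add_one: "gcd m (k * m + 1) = 1" for k m :: nat
  using gcd_add_mult[of m k 1] by simp

lemma quadratic_bound_less_cube:
  fixes a q N :: nat
  assumes "a \<ge> 1" and "a * N < q"
  shows "(a - 1) * q * q + a * (N - 1) < a * q ^ 3 + 1" and "a * q < a * q ^ 3 + 1"
proof -
  have "q \<ge> 1" using assms by simp
  then have q_le_qq: "q \<le> q * q" by simp
  have "a * (N - 1) \<le> a * N" by simp
  with assms q_le_qq have "(a - 1) * q * q + a * (N - 1) \<le> (a - 1) * q * q + q * q"
    by linarith
  also have "\<dots> = a * q * q"
    using \<open>a \<ge> 1\<close> by (cases a) (simp_all add: algebra_simps)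
  also have "\<dots> \<le> a * q ^ 3"
    using q_le_qq by (simp add: power3_eq_cube mult.assoc)
  finally show "(a - 1) * q * q + a * (N - 1) < a * q ^ 3 + 1" by simp
  have "q \<le> q ^ 3"
    using power_increasing[of 1 3 q] \<open>q \<ge> 1\<close> by simp
  then have "a * q \<le> a * q ^ 3" by (rule mult_le_mono2)
  then show "a * q < a * q ^ 3 + 1" by linarith
qed

theorem lemma4p1:
  fixes N a :: nat
  assumes "N \<ge> 1" and "a \<ge> 1"
  shows "\<exists>p c d :: nat. p \<ge> 1 \<and> c \<ge> 1 \<and> d \<ge> 1 \<and>
    gcd a p = 1 \<and> gcd a c = 1 \<and> gcd c d = 1 \<and>
    [p * c = 1] (mod a) \<and> [p * d = 1] (mod a) \<and>
    p > N \<and> p * c > a * N \<and>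
    int d > max ((int a - 1) * int p * int c + int a * (int N - 1)) (int a * int c)"
proof -
  define q where "q = N * a + 1"
  define d where "d = q ^ 3 * a + 1"
  have q_cong: "[q = 1] (mod a)" and d_cong: "[d = 1] (mod a)"
    unfolding q_def d_def by (rule cong_mult_add_one)+
  have coprime_a_q: "gcd a q = 1" unfolding q_def by (rule gcd_mult_add_one)
  have coprime_q_d: "gcd q d = 1"
    using gcd_mult_add_one[of q "q ^ 2 * a"]
    by (simp add: d_def power3_eq_cube power2_eq_square mult_ac)
  have qq_cong: "[q * q = 1] (mod a)" and qd_cong: "[q * d = 1] (mod a)"
    using cong_mult[OF q_cong q_cong] cong_mult[OF q_cong d_cong] by simp_all
  have aN_less_q: "a * N < q" unfolding q_def by simp
  have "N \<le> a * N" and "q \<le> q * q" using \<open>a \<ge> 1\<close> by (simp_all add: q_def)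
  with aN_less_q have N_less_q: "N < q" and aN_less_qq: "a * N < q * q" by linarith+
  have "(a - 1) * q * q + a * (N - 1) < d" and "a * q < d"
    using quadratic_bound_less_cube[OF \<open>a \<ge> 1\<close> aN_less_q] by (simp_all add: d_def mult.commute)
  then have "int ((a - 1) * q * q + a * (N - 1)) < int d" and "int a * int q < int d"
    by (simp_all only: of_nat_less_iff flip: of_nat_mult)
  moreover have "int ((a - 1) * q * q + a * (N - 1)) = (int a - 1) * int q * int q + int a * (int N - 1)"
    using assms by (simp add: of_nat_diff)
  ultimately have d_large: "int d > max ((int a - 1) * int q * int q + int a * (int N - 1)) (int a * int q)"
    by simp
  have "q \<ge> 1" "d \<ge> 1" unfolding q_def d_def by simp_all
  then show ?thesis
    using coprime_a_q coprime_q_d qq_cong qd_cong N_less_q aN_less_qq d_large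
    by (intro exI[of _ q] exI[of _ q] exI[of _ d] conjI) simp_all
qed

end
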